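(* Let $H$ be a finite field, $\mathbb{F}$ an extension of $H$ of degree $m$, $n=|\mathbb{F}|$, $d<n$, $\delta=1-d/n\ge3/4$, and $0<\rho\le\delta/8$. Let $f\colon\mathbb{F}^m\to\mathbb{F}$ and $x\in\mathbb{F}^m$ with $f(x)\neq0$, and let $R\ge1$. Run the $R$-step $H$-plane-line random walk from $x$, and fix $h_0,h'_0$ (hence $P_0$) such that $\mathrm{dist}_{\{(0,0)\}}(f|_{P_0},\mathrm{RM}_{\mathbb{F}}(2,d))<\rho$. For $i\in[R]$ let $F_i$ be the event that $N(\ell_i)\ge2\rho n$ and $N(P_i)\ge(\delta-2\rho)n^2$, let $E_i$ be the event that $N(\ell_i)\ge2\rho n$ and $N(P_i)<(\delta-2\rho)n^2$, and let $\epsilon_i=\Pr[F_1\wedge\dots\wedge F_{i-1}\wedge E_i]$. Then, with all probabilities taken over the remaining randomness of the walk (with $P_0$ fixed), \[ \Pr[F_1\wedge\dots\wedge F_R]\ge\Big(1-\frac4n\Big)^R-\sum_{i=1}^R\epsilon_i. \]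
   Context: $\mathrm{RM}_{\mathbb{F}}(2,d)$ is the set of evaluation tables $\mathbb{F}^2\to\mathbb{F}$ of bivariate polynomials of total degree at most $d$. For $a,h,h'\in\mathbb{F}^m$, the plane $P=(a,h,h')$ has restriction $f|_P\colon\mathbb{F}^2\to\mathbb{F}$, $(t,s)\mapsto f(a+th+sh')$, and $N(P)=|\{(t,s)\in\mathbb{F}^2: f|_P(t,s)\ne0\}|$. For a line $\ell=\{b+tu:t\in\mathbb{F}\}$ (given by $b,u$), $N(\ell)=|\{t\in\mathbb{F}:f(b+tu)\ne0\}|$. Weighted distance: for strings $u,v$ indexed by $I$ with $|I|=N$ and $\emptyset\ne A\subseteq I$, $\mathrm{dist}_A(u,v)=\frac{|\{i\in A:u_i\ne v_i\}|}{2|A|}+\frac{|\{i\in I:u_i\ne v_i\}|}{2N}$, $\mathrm{dist}_A(u,S)=\min_{v\in S}\mathrm{dist}_A(u,v)$. The $R$-step $H$-plane-line random walk from $x$: set $x_0=x$, choose $h_0,h_0'\in H^m$ uniformly, $P_0=(x_0,h_0,h_0')$. For $i=1,\dots,R$: choose $s_{i-1},s'_{i-1},t_{i-1},t'_{i-1}\in\mathbb{F}$ uniformly, set $x_i=x_{i-1}+s_{i-1}h_{i-1}+s'_{i-1}h'_{i-1}$, $h_i=t_{i-1}h_{i-1}+t'_{i-1}h'_{i-1}$, the line $\ell_i=\{x_i+th_i:t\in\mathbb{F}\}$, choose $h'_i\in H^m$ uniformly, and set $P_i=(x_i,h_i,h'_i)$. All random choices are independent. *)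

theory Defs
  imports "HOL-Probability.Probability"
begin

definition is_subfield :: "'f::field set \<Rightarrow> bool" where
  "is_subfield H \<longleftrightarrow> 0 \<in> H \<and> 1 \<in> H \<and>
     (\<forall>a\<in>H. \<forall>b\<in>H. a + b \<in> H \<and> a * b \<in> H) \<and>
     (\<forall>a\<in>H. - a \<in> H) \<and> (\<forall>a\<in>H. a \<noteq> 0 \<longrightarrow> inverse a \<in> H)"

definition ext_degree :: "'f::field set \<Rightarrow> nat \<Rightarrow> bool" where
  "ext_degree H m \<longleftrightarrow> (\<exists>b :: nat \<Rightarrow> 'f.
     bij_betw (\<lambda>c. \<Sum>i<m. c i * b i) ({..<m} \<rightarrow>\<^sub>E H) UNIV)"

text \<open>Points of F^m are functions 'm \<Rightarrow> 'f with CARD('m) = m. H^m:\<close>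
definition Hvecs :: "'f set \<Rightarrow> ('m \<Rightarrow> 'f) set" where
  "Hvecs H = {h. \<forall>j. h j \<in> H}"

definition RM2 :: "nat \<Rightarrow> ('f::field \<times> 'f \<Rightarrow> 'f) set" where
  "RM2 d = {g. \<exists>c :: nat \<Rightarrow> nat \<Rightarrow> 'f. \<forall>t s.
      g (t, s) = (\<Sum>i\<le>d. \<Sum>j\<le>d - i. c i j * t ^ i * s ^ j)}"

definition distA :: "'i::finite set \<Rightarrow> ('i \<Rightarrow> 'b) \<Rightarrow> ('i \<Rightarrow> 'b) \<Rightarrow> real" where
  "distA A u v = real (card {i\<in>A. u i \<noteq> v i}) / (2 * real (card A))
               + real (card {i. u i \<noteq> v i}) / (2 * real CARD('i))"

definition distA_set :: "'i::finite set \<Rightarrow> ('i \<Rightarrow> 'b) \<Rightarrow> ('i \<Rightarrow> 'b) set \<Rightarrow> real" where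
  "distA_set A u S = Min (distA A u ` S)"

definition restr_plane :: "(('m \<Rightarrow> 'f::field) \<Rightarrow> 'f) \<Rightarrow> ('m \<Rightarrow> 'f) \<Rightarrow> ('m \<Rightarrow> 'f) \<Rightarrow> ('m \<Rightarrow> 'f)
      \<Rightarrow> ('f \<times> 'f \<Rightarrow> 'f)" where
  "restr_plane f a h h' = (\<lambda>(t, s). f (\<lambda>j. a j + t * h j + s * h' j))"

definition Nplane :: "(('m \<Rightarrow> 'f::{finite,field}) \<Rightarrow> 'f) \<Rightarrow> ('m \<Rightarrow> 'f) \<Rightarrow> ('m \<Rightarrow> 'f) \<Rightarrow> ('m \<Rightarrow> 'f) \<Rightarrow> nat" where
  "Nplane f a h h' = card {p :: 'f \<times> 'f. restr_plane f a h h' p \<noteq> 0}"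

definition Nline :: "(('m \<Rightarrow> 'f::{finite,field}) \<Rightarrow> 'f) \<Rightarrow> ('m \<Rightarrow> 'f) \<Rightarrow> ('m \<Rightarrow> 'f) \<Rightarrow> nat" where
  "Nline f b u = card {t :: 'f. f (\<lambda>j. b j + t * u j) \<noteq> 0}"

text \<open>The plane-line walk. \<omega> i = (s_i, s'_i, t_i, t'_i, h'_{i+1}) is the randomness of step i+1.
  walk x h0 h0' \<omega> i = (x_i, h_i, h'_i); the line is \<ell>_i = (x_i, h_i) and the plane P_i = (x_i,h_i,h'_i).\<close>
fun walk :: "('m \<Rightarrow> 'f::field) \<Rightarrow> ('m \<Rightarrow> 'f) \<Rightarrow> ('m \<Rightarrow> 'f)
      \<Rightarrow> (nat \<Rightarrow> 'f \<times> 'f \<times> 'f \<times> 'f \<times> ('m \<Rightarrow> 'f)) \<Rightarrow> nat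
      \<Rightarrow> ('m \<Rightarrow> 'f) \<times> ('m \<Rightarrow> 'f) \<times> ('m \<Rightarrow> 'f)" where
  "walk x h0 h0' \<omega> 0 = (x, h0, h0')"
| "walk x h0 h0' \<omega> (Suc i) =
     (case walk x h0 h0' \<omega> i of (xi, hi, hi') \<Rightarrow>
       (case \<omega> i of (s, s', t, t', g) \<Rightarrow>
         ((\<lambda>j. xi j + s * hi j + s' * hi' j), (\<lambda>j. t * hi j + t' * hi' j), g)))"

definition walk_space :: "'f::{finite,field} set \<Rightarrow> nat
      \<Rightarrow> (nat \<Rightarrow> 'f \<times> 'f \<times> 'f \<times> 'f \<times> ('m::finite \<Rightarrow> 'f)) set" where
  "walk_space H R = {..<R} \<rightarrow>\<^sub>E (UNIV \<times> UNIV \<times> UNIV \<times> UNIV \<times> Hvecs H)"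

definition walk_prob :: "'f::{finite,field} set \<Rightarrow> nat
      \<Rightarrow> ((nat \<Rightarrow> 'f \<times> 'f \<times> 'f \<times> 'f \<times> ('m::finite \<Rightarrow> 'f)) \<Rightarrow> bool) \<Rightarrow> real" where
  "walk_prob H R E = measure_pmf.prob (pmf_of_set (walk_space H R)) {\<omega>. E \<omega>}"

definition eventF :: "(('m \<Rightarrow> 'f::{finite,field}) \<Rightarrow> 'f) \<Rightarrow> real \<Rightarrow> real \<Rightarrow> ('m \<Rightarrow> 'f)
      \<Rightarrow> ('m \<Rightarrow> 'f) \<Rightarrow> ('m \<Rightarrow> 'f) \<Rightarrow> (nat \<Rightarrow> 'f \<times> 'f \<times> 'f \<times> 'f \<times> ('m \<Rightarrow> 'f)) \<Rightarrow> nat \<Rightarrow> bool" where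
  "eventF f \<delta> \<rho> x h0 h0' \<omega> i = (case walk x h0 h0' \<omega> i of (xi, hi, hi') \<Rightarrow>
      real (Nline f xi hi) \<ge> 2 * \<rho> * real CARD('f) \<and>
      real (Nplane f xi hi hi') \<ge> (\<delta> - 2 * \<rho>) * real CARD('f) ^ 2)"

definition eventE :: "(('m \<Rightarrow> 'f::{finite,field}) \<Rightarrow> 'f) \<Rightarrow> real \<Rightarrow> real \<Rightarrow> ('m \<Rightarrow> 'f)
      \<Rightarrow> ('m \<Rightarrow> 'f) \<Rightarrow> ('m \<Rightarrow> 'f) \<Rightarrow> (nat \<Rightarrow> 'f \<times> 'f \<times> 'f \<times> 'f \<times> ('m \<Rightarrow> 'f)) \<Rightarrow> nat \<Rightarrow> bool" where
  "eventE f \<delta> \<rho> x h0 h0' \<omega> i = (case walk x h0 h0' \<omega> i of (xi, hi, hi') \<Rightarrow>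
      real (Nline f xi hi) \<ge> 2 * \<rho> * real CARD('f) \<and>
      real (Nplane f xi hi hi') < (\<delta> - 2 * \<rho>) * real CARD('f) ^ 2)"

end

theory Submission
  imports Defs "HOL-Computational_Algebra.Polynomial"
begin

text \<open>A walk survives step \<open>i\<close> unless the new line \<open>\<ell>\<^sub>i\<close> or the new plane \<open>P\<^sub>i\<close> is sparse; the
  second failure is the event \<open>E\<^sub>i\<close>. Given the history, \<open>\<ell>\<^sub>i\<close> is a uniformly random (possibly
  degenerate) line \<open>(p, u)\<close> of the plane \<open>P\<^sub>i\<^sub>-\<^sub>1\<close>. If that plane is dense, i.e. has at least
  \<open>(\<delta> - 2\<rho>) n\<^sup>2\<close> nonzero points, a second moment computation over all \<open>n\<^sup>4\<close> pairs \<open>(p, u)\<close> shows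
  that at most a fraction \<open>q = 16/(9n)\<close> of these lines is sparse. The plane \<open>P\<^sub>0\<close> is dense because
  \<open>f|\<^sub>P\<^sub>0\<close> differs in fewer than \<open>2\<rho>n\<^sup>2\<close> points from a degree \<open>d\<close> polynomial that is nonzero at
  the origin, and such a polynomial has at most \<open>dn\<close> zeros. Hence
  \<open>Pr[F\<^sub>1 \<dots> F\<^sub>i] \<ge> (1 - q) Pr[F\<^sub>1 \<dots> F\<^sub>i\<^sub>-\<^sub>1] - \<epsilon>\<^sub>i\<close>, which unrolls to the claim because
  \<open>|1 - 4/n| \<le> 1 - q\<close>. For \<open>n = 2\<close> this needs \<open>q = 0\<close>: then \<open>m = 1\<close>, and every point of a dense
  plane is nonzero.\<close>

section \<open>Sparse lines in a dense subset of the plane\<close>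

definition line_point :: "'f::field \<times> 'f \<Rightarrow> 'f \<Rightarrow> 'f \<times> 'f \<Rightarrow> 'f \<times> 'f" where
  "line_point p \<tau> u = (fst p + \<tau> * fst u, snd p + \<tau> * snd u)"

text \<open>The number of parameters \<open>\<tau>\<close>, not of points: for \<open>u = 0\<close> the degenerate line \<open>p\<close> is
  counted \<open>n\<close> times, as \<open>Nline\<close> does for a walk direction \<open>h\<^sub>i = 0\<close>.\<close>
definition line_hits :: "('f::{finite,field} \<times> 'f) set \<Rightarrow> 'f \<times> 'f \<Rightarrow> 'f \<times> 'f \<Rightarrow> nat" where
  "line_hits Z p u = card {\<tau>. line_point p \<tau> u \<in> Z}"

lemma real_line_hits: "real (line_hits Z p u) = (\<Sum>\<tau>\<in>UNIV. of_bool (line_point p \<tau> u \<in> Z))"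
  unfolding line_hits_def by (simp add: sum_of_bool_eq)

lemma sum_line_point_translate:
  fixes g :: "'f::{finite,field} \<times> 'f \<Rightarrow> 'a::comm_monoid_add"
  shows "(\<Sum>p\<in>UNIV. g (line_point p \<tau> u)) = (\<Sum>p\<in>UNIV. g p)"
  by (rule sum.reindex_bij_witness[where i="\<lambda>p. line_point p (-\<tau>) u" and j="\<lambda>p. line_point p \<tau> u"])
     (auto simp: line_point_def)

lemma sum_line_point_direction:
  fixes g :: "'f::{finite,field} \<times> 'f \<Rightarrow> 'a::comm_monoid_add"
  assumes "c \<noteq> 0"
  shows "(\<Sum>u\<in>UNIV. g (line_point p c u)) = (\<Sum>u\<in>UNIV. g u)"
  by (rule sum.reindex_bij_witness[where i="\<lambda>q. ((fst q - fst p) / c, (snd q - snd p) / c)"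
        and j="\<lambda>u. line_point p c u"])
     (use assms in \<open>auto simp: line_point_def\<close>)

lemma sum_line_hits:
  fixes Z :: "('f::{finite,field} \<times> 'f) set"
  shows "(\<Sum>p\<in>UNIV. \<Sum>u\<in>UNIV. real (line_hits Z p u)) = real CARD('f) ^ 3 * real (card Z)"
proof -
  have "(\<Sum>p\<in>UNIV. \<Sum>u\<in>UNIV. real (line_hits Z p u))
      = (\<Sum>u\<in>UNIV. \<Sum>\<tau>\<in>UNIV. \<Sum>p\<in>UNIV. of_bool (line_point p \<tau> u \<in> Z))"
    unfolding real_line_hits by (rule trans[OF sum.swap], rule sum.cong[OF refl], rule sum.swap)
  also have "\<dots> = (\<Sum>u\<in>(UNIV :: ('f \<times> 'f) set). \<Sum>\<tau>\<in>(UNIV :: 'f set). real (card Z))"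
    by (simp add: sum_line_point_translate[of "\<lambda>p. of_bool (p \<in> Z)"] sum_of_bool_eq)
  finally show ?thesis by (simp add: power3_eq_cube)
qed

lemma sum_rotate3:
  "(\<Sum>a\<in>A. \<Sum>b\<in>B. \<Sum>c\<in>C. g a b c) = (\<Sum>b\<in>B. \<Sum>c\<in>C. \<Sum>a\<in>A. g a b c)"
  by (rule trans[OF sum.swap], rule sum.cong[OF refl], rule sum.swap)

lemma sum_line_point_pair:
  fixes Z :: "('f::{finite,field} \<times> 'f) set"
  defines "n \<equiv> real CARD('f)" and "M \<equiv> real (card Z)"
  shows "(\<Sum>p\<in>UNIV. \<Sum>u\<in>UNIV. of_bool (line_point p \<tau> u \<in> Z) * of_bool (line_point p \<tau>' u \<in> Z))
      = (if \<tau> = \<tau>' then n ^ 2 * M else M ^ 2)"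
proof (cases "\<tau> = \<tau>'")
  case True
  have "(\<Sum>u\<in>UNIV. \<Sum>p\<in>UNIV. of_bool (line_point p \<tau> u \<in> Z)) = (\<Sum>u\<in>(UNIV :: ('f \<times> 'f) set). M)"
    by (simp add: sum_line_point_translate[of "\<lambda>p. of_bool (p \<in> Z)"] sum_of_bool_eq M_def)
  with True show ?thesis
    by (subst sum.swap) (simp add: n_def power2_eq_square)
next
  case False
  have shift: "line_point (line_point p \<tau> u) (\<tau>' - \<tau>) u = line_point p \<tau>' u" for p u
    by (simp add: line_point_def algebra_simps)
  have "(\<Sum>p\<in>UNIV. of_bool (line_point p \<tau> u \<in> Z) * of_bool (line_point p \<tau>' u \<in> Z))
      = (\<Sum>p\<in>UNIV. of_bool (p \<in> Z) * of_bool (line_point p (\<tau>' - \<tau>) u \<in> Z) :: real)" for u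
    using sum_line_point_translate[of "\<lambda>p. of_bool (p \<in> Z) * of_bool (line_point p (\<tau>' - \<tau>) u \<in> Z)" \<tau> u]
    by (simp only: shift)
  then have "(\<Sum>p\<in>UNIV. \<Sum>u\<in>UNIV. of_bool (line_point p \<tau> u \<in> Z) * of_bool (line_point p \<tau>' u \<in> Z))
      = (\<Sum>u\<in>UNIV. \<Sum>p\<in>UNIV. of_bool (p \<in> Z) * of_bool (line_point p (\<tau>' - \<tau>) u \<in> Z) :: real)"
    by (subst sum.swap) simp
  also have "\<dots> = (\<Sum>p\<in>UNIV. of_bool (p \<in> Z) * (\<Sum>u\<in>UNIV. of_bool (line_point p (\<tau>' - \<tau>) u \<in> Z)))"
    by (subst sum.swap) (simp only: sum_distrib_left)
  also have "\<dots> = (\<Sum>p\<in>UNIV. of_bool (p \<in> Z) * M)"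
  proof -
    have "(\<Sum>u\<in>UNIV. of_bool (line_point p (\<tau>' - \<tau>) u \<in> Z)) = (\<Sum>u\<in>UNIV. of_bool (u \<in> Z) :: real)" for p
      using False by (intro sum_line_point_direction) simp
    also have "\<dots> = M" by (simp add: sum_of_bool_eq M_def)
    finally have "(\<Sum>u\<in>UNIV. of_bool (line_point p (\<tau>' - \<tau>) u \<in> Z)) = M" for p .
    then show ?thesis by (simp only:)
  qed
  finally show ?thesis
    using False by (simp add: sum_distrib_right[symmetric] sum_of_bool_eq M_def power2_eq_square)
qed

lemma sum_line_hits_sq:
  fixes Z :: "('f::{finite,field} \<times> 'f) set"
  defines "n \<equiv> real CARD('f)" and "M \<equiv> real (card Z)"
  shows "(\<Sum>p\<in>UNIV. \<Sum>u\<in>UNIV. real (line_hits Z p u) ^ 2) = n ^ 3 * M + n * (n - 1) * M ^ 2"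
proof -
  have "(\<Sum>p\<in>UNIV. \<Sum>u\<in>UNIV. real (line_hits Z p u) ^ 2)
      = (\<Sum>p\<in>UNIV. \<Sum>u\<in>UNIV. \<Sum>\<tau>\<in>UNIV. \<Sum>\<tau>'\<in>UNIV.
           of_bool (line_point p \<tau> u \<in> Z) * of_bool (line_point p \<tau>' u \<in> Z))"
    unfolding real_line_hits power2_eq_square sum_product ..
  also have "\<dots> = (\<Sum>\<tau>\<in>UNIV. \<Sum>\<tau>'\<in>UNIV. \<Sum>p\<in>UNIV. \<Sum>u\<in>UNIV.
           of_bool (line_point p \<tau> u \<in> Z) * of_bool (line_point p \<tau>' u \<in> Z))"
    by (rule trans[OF sum.cong[OF refl sum_rotate3] sum_rotate3])
  also have "\<dots> = (\<Sum>\<tau>\<in>(UNIV :: 'f set). \<Sum>\<tau>'\<in>UNIV. if \<tau> = \<tau>' then n ^ 2 * M else M ^ 2)"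
    unfolding sum_line_point_pair n_def M_def ..
  also have "\<dots> = (\<Sum>\<tau>\<in>(UNIV :: 'f set). n ^ 2 * M + (n - 1) * M ^ 2)"
  proof (rule sum.cong[OF refl])
    fix \<tau> :: 'f
    have "(\<Sum>\<tau>'\<in>UNIV. if \<tau> = \<tau>' then n ^ 2 * M else M ^ 2) = n ^ 2 * M + (\<Sum>\<tau>'\<in>UNIV - {\<tau>}. M ^ 2)"
      by (subst sum.remove[of _ \<tau>]) (auto intro!: sum.cong)
    then show "(\<Sum>\<tau>'\<in>UNIV. if \<tau> = \<tau>' then n ^ 2 * M else M ^ 2) = n ^ 2 * M + (n - 1) * M ^ 2"
      by (simp add: card_Diff_singleton n_def)
  qed
  finally show ?thesis by (simp add: n_def algebra_simps power2_eq_square power3_eq_cube)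
qed

lemma sum_line_hits_deviation_sq:
  fixes Z :: "('f::{finite,field} \<times> 'f) set"
  defines "n \<equiv> real CARD('f)" and "M \<equiv> real (card Z)"
  shows "(\<Sum>p\<in>UNIV. \<Sum>u\<in>UNIV. (real (line_hits Z p u) - M / n) ^ 2) = n * M * (n ^ 2 - M)"
proof -
  have "n > 0" by (simp add: n_def)
  have "(\<Sum>p\<in>UNIV. \<Sum>u\<in>UNIV. (real (line_hits Z p u) - M / n) ^ 2)
      = (\<Sum>p\<in>UNIV. \<Sum>u\<in>UNIV. real (line_hits Z p u) ^ 2)
        - 2 * (M / n) * (\<Sum>p\<in>UNIV. \<Sum>u\<in>UNIV. real (line_hits Z p u)) + n ^ 4 * (M / n) ^ 2"
    by (simp add: power2_diff sum_subtractf sum.distrib sum_distrib_left sum_divide_distrib n_def power4_eq_xxxx mult_ac)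
  also have "\<dots> = n ^ 3 * M + n * (n - 1) * M ^ 2 - 2 * (M / n) * (n ^ 3 * M) + n ^ 4 * (M / n) ^ 2"
    unfolding sum_line_hits_sq sum_line_hits n_def M_def ..
  also have "\<dots> = n * M * (n ^ 2 - M)"
    using \<open>n > 0\<close> by (simp add: field_simps power2_eq_square power3_eq_cube power4_eq_xxxx)
  finally show ?thesis .
qed

lemma card_sparse_line_hits_mult_le:
  fixes Z :: "('f::{finite,field} \<times> 'f) set"
  defines "n \<equiv> real CARD('f)" and "M \<equiv> real (card Z)"
  assumes "\<theta> \<le> M / n"
  shows "real (card {(p, u). real (line_hits Z p u) < \<theta>}) * (M / n - \<theta>) ^ 2 \<le> n * M * (n ^ 2 - M)"
proof -
  define B where "B = {(p, u). real (line_hits Z p u) < \<theta>}"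
  have "real (card B) * (M / n - \<theta>) ^ 2 = (\<Sum>(p, u)\<in>B. (M / n - \<theta>) ^ 2)"
    by simp
  also have "\<dots> \<le> (\<Sum>(p, u)\<in>B. (real (line_hits Z p u) - M / n) ^ 2)"
  proof (rule sum_mono)
    fix q assume "q \<in> B"
    then have "M / n - \<theta> \<le> M / n - real (line_hits Z (fst q) (snd q))" "0 \<le> M / n - \<theta>"
      using assms(3) by (auto simp: B_def)
    then have "(M / n - \<theta>) ^ 2 \<le> (M / n - real (line_hits Z (fst q) (snd q))) ^ 2"
      by (rule power_mono)
    then show "(case q of (p, u) \<Rightarrow> (M / n - \<theta>) ^ 2) \<le> (case q of (p, u) \<Rightarrow> (real (line_hits Z p u) - M / n) ^ 2)"
      by (simp add: case_prod_beta power2_commute)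
  qed
  also have "\<dots> \<le> (\<Sum>(p, u)\<in>UNIV. (real (line_hits Z p u) - M / n) ^ 2)"
    by (rule sum_mono2) auto
  also have "\<dots> = (\<Sum>p\<in>UNIV. \<Sum>u\<in>UNIV. (real (line_hits Z p u) - M / n) ^ 2)"
    by (simp only: sum.cartesian_product UNIV_Times_UNIV)
  also have "\<dots> = n * M * (n ^ 2 - M)"
    unfolding n_def M_def by (rule sum_line_hits_deviation_sq)
  finally show ?thesis unfolding B_def .
qed

lemma card_sparse_line_hits_le:
  fixes Z :: "('f::{finite,field} \<times> 'f) set"
  defines "n \<equiv> real CARD('f)"
  assumes dense: "(\<delta> - 2 * \<rho>) * n ^ 2 \<le> real (card Z)"
    and "3 / 4 \<le> \<delta>" and "0 < \<rho>" and "\<rho> \<le> \<delta> / 8"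
  shows "real (card {(p, u). real (line_hits Z p u) < 2 * \<rho> * n}) \<le> 16 / (9 * n) * n ^ 4"
proof -
  define M where "M = real (card Z)"
  have "n > 0" by (simp add: n_def)
  have "(\<delta> - 2 * \<rho>) * n \<le> M / n"
    using dense \<open>n > 0\<close> by (simp add: M_def field_simps power2_eq_square)
  moreover have "3 / 8 * n \<le> (\<delta> - 4 * \<rho>) * n"
    using assms(3-5) \<open>n > 0\<close> by (intro mult_right_mono) auto
  ultimately have gap: "3 / 8 * n \<le> M / n - 2 * \<rho> * n"
    by (simp add: algebra_simps)
  have "M * (n ^ 2 - M) \<le> n ^ 4 / 4"
    using sum_squares_ge_zero[of "n ^ 2 - 2 * M" 0] by (simp add: power2_eq_square power4_eq_xxxx algebra_simps)
  define c where "c = real (card {(p, u). real (line_hits Z p u) < 2 * \<rho> * n})"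
  have "2 * \<rho> * n \<le> M / n" using gap \<open>n > 0\<close> by linarith
  have "c * (3 / 8 * n) ^ 2 \<le> c * (M / n - 2 * \<rho> * n) ^ 2"
    using gap \<open>n > 0\<close> by (intro mult_left_mono power_mono) (auto simp: c_def)
  also have "\<dots> \<le> n * M * (n ^ 2 - M)"
    using card_sparse_line_hits_mult_le[of "2 * \<rho> * n" Z] \<open>2 * \<rho> * n \<le> M / n\<close>
    by (simp add: c_def M_def n_def)
  also have "\<dots> \<le> n * (n ^ 4 / 4)"
    using \<open>M * (n ^ 2 - M) \<le> n ^ 4 / 4\<close> \<open>n > 0\<close> by (simp add: mult.assoc)
  finally show ?thesis
    using \<open>n > 0\<close> by (simp add: c_def field_simps power2_eq_square power4_eq_xxxx)
qed

section \<open>Zeros of bivariate polynomials and the first plane\<close>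

lemma card_pairs_eq_sum:
  fixes P :: "'a::finite \<times> 'b::finite \<Rightarrow> bool"
  shows "card {p. P p} = (\<Sum>b\<in>UNIV. card {a. P (a, b)})"
proof -
  have "{p. P p} = (\<Union>b. (\<lambda>a. (a, b)) ` {a. P (a, b)})" by auto
  then have "card {p. P p} = (\<Sum>b\<in>UNIV. card ((\<lambda>a. (a, b)) ` {a. P (a, b)}))"
    by (simp, subst card_UN_disjoint) auto
  also have "\<dots> = (\<Sum>b\<in>UNIV. card {a. P (a, b)})"
    by (intro sum.cong refl card_image) (auto simp: inj_on_def)
  finally show ?thesis .
qed

lemma card_zeros_bivariate_le:
  fixes Q :: "nat \<Rightarrow> 'f::{finite,field} poly"
  assumes "Q k \<noteq> 0" and "degree (Q k) \<le> e"
  shows "card {(t, s). (\<Sum>i\<le>k. poly (Q i) s * t ^ i) = 0} \<le> (k + e) * CARD('f)"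
proof -
  define P where "P s = (\<Sum>i\<le>k. monom (poly (Q i) s) i)" for s
  have poly_P: "poly (P s) t = (\<Sum>i\<le>k. poly (Q i) s * t ^ i)" for s t
    by (simp add: P_def poly_sum poly_monom)
  \<comment> \<open>For fixed s, a polynomial in t of degree at most k, nonzero unless s is a root of Q k.\<close>
  have roots_P: "card {t. poly (P s) t = 0} \<le> k + (if poly (Q k) s = 0 then CARD('f) else 0)" for s
  proof (cases "poly (Q k) s = 0")
    case True
    have "card {t. poly (P s) t = 0} \<le> CARD('f)" by (rule card_mono) auto
    with True show ?thesis by simp
  next
    case False
    have "coeff (P s) k = poly (Q k) s" by (simp add: P_def coeff_sum)
    with False have "P s \<noteq> 0" by auto
    moreover have "degree (P s) \<le> k"
      unfolding P_def by (intro degree_sum_le) (auto intro: order.trans[OF degree_monom_le])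
    ultimately show ?thesis using card_poly_roots_bound[of "P s"] False by simp
  qed
  have "card {(t, s). (\<Sum>i\<le>k. poly (Q i) s * t ^ i) = 0} = (\<Sum>s\<in>UNIV. card {t. poly (P s) t = 0})"
    by (subst card_pairs_eq_sum) (simp add: poly_P)
  also have "\<dots> \<le> (\<Sum>s\<in>UNIV. k + (if poly (Q k) s = 0 then CARD('f) else 0))"
    by (intro sum_mono roots_P)
  also have "\<dots> = CARD('f) * k + CARD('f) * card {s. poly (Q k) s = 0}"
    by (simp add: sum.distrib sum.If_cases Int_def)
  also have "\<dots> \<le> CARD('f) * k + CARD('f) * e"
    using card_poly_roots_bound[OF assms(1)] assms(2) by simp
  finally show ?thesis by (simp add: algebra_simps)
qed

lemma RM2_card_zeros_le:
  fixes g :: "'f::{finite,field} \<times> 'f \<Rightarrow> 'f"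
  assumes "g \<in> RM2 d" and "g \<noteq> (\<lambda>_. 0)"
  shows "card {p. g p = 0} \<le> d * CARD('f)"
proof -
  obtain c where g: "\<And>t s. g (t, s) = (\<Sum>i\<le>d. \<Sum>j\<le>d - i. c i j * t ^ i * s ^ j)"
    using assms(1) unfolding RM2_def by auto
  define Q where "Q i = (\<Sum>j\<le>d - i. monom (c i j) j)" for i
  have g_Q: "g (t, s) = (\<Sum>i\<le>d. poly (Q i) s * t ^ i)" for t s
    by (simp add: g Q_def poly_sum poly_monom sum_distrib_left mult_ac)
  have "\<exists>i\<le>d. Q i \<noteq> 0"
  proof (rule ccontr)
    assume "\<not> ?thesis"
    then have "g = (\<lambda>_. 0)" by (auto simp: g_Q)
    with assms(2) show False ..
  qed
  define k where "k = Max {i. i \<le> d \<and> Q i \<noteq> 0}"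
  have k: "k \<le> d" "Q k \<noteq> 0"
    using Max_in[of "{i. i \<le> d \<and> Q i \<noteq> 0}"] \<open>\<exists>i\<le>d. Q i \<noteq> 0\<close> by (auto simp: k_def)
  have "Q i = 0" if "k < i" "i \<le> d" for i
    using that Max_ge[of "{i. i \<le> d \<and> Q i \<noteq> 0}" i] unfolding k_def by fastforce
  then have "g (t, s) = (\<Sum>i\<le>k. poly (Q i) s * t ^ i)" for t s
    unfolding g_Q using k(1) by (intro sum.mono_neutral_right) auto
  then have "{p. g p = 0} = {(t, s). (\<Sum>i\<le>k. poly (Q i) s * t ^ i) = 0}"
    by auto
  also have "card \<dots> \<le> (k + (d - k)) * CARD('f)"
  proof (rule card_zeros_bivariate_le[where Q=Q, OF k(2)])
    show "degree (Q k) \<le> d - k"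
      unfolding Q_def by (intro degree_sum_le) (auto intro: order.trans[OF degree_monom_le])
  qed
  finally show ?thesis using k(1) by simp
qed

lemma zero_in_RM2: "(\<lambda>_. 0) \<in> RM2 d"
  unfolding RM2_def by (rule CollectI, rule exI[of _ "\<lambda>_ _. 0"]) simp

lemma Nplane_ge_of_distA_set_RM2:
  fixes f :: "('m::finite \<Rightarrow> 'f::{finite,field}) \<Rightarrow> 'f"
  defines "n \<equiv> real CARD('f)"
  assumes close: "distA_set {(0, 0)} (restr_plane f a h h') (RM2 d) < \<rho>"
    and "\<rho> \<le> 1 / 2" and "f a \<noteq> 0"
  shows "(1 - real d / n - 2 * \<rho>) * n ^ 2 \<le> real (Nplane f a h h')"
proof -
  define u where "u = restr_plane f a h h'"
  have "n > 0" by (simp add: n_def)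
  have "finite (RM2 d :: ('f \<times> 'f \<Rightarrow> 'f) set)" "RM2 d \<noteq> {}"
    using zero_in_RM2 by auto
  then obtain g where g: "g \<in> RM2 d" and dist_g: "distA {(0, 0)} u g < \<rho>"
    using close unfolding distA_set_def u_def by (subst (asm) Min_less_iff) auto
  have "u (0, 0) = g (0, 0)"
  proof (rule ccontr)
    assume "u (0, 0) \<noteq> g (0, 0)"
    then have "{i \<in> {(0, 0)}. u i \<noteq> g i} = {(0, 0)}" by auto
    then have "1 / 2 \<le> distA {(0, 0)} u g" by (simp add: distA_def)
    with dist_g \<open>\<rho> \<le> 1 / 2\<close> show False by simp
  qed
  then have "g \<noteq> (\<lambda>_. 0)" using \<open>f a \<noteq> 0\<close> by (auto simp: u_def restr_plane_def)
  then have zeros_g: "real (card {p. g p = 0}) \<le> real d * n"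
    using RM2_card_zeros_le[OF g] unfolding n_def by (metis of_nat_le_iff of_nat_mult)
  have "{p. g p \<noteq> 0} \<union> {p. g p = 0} = UNIV" by auto
  then have "card {p. g p \<noteq> 0} + card {p. g p = 0} = CARD('f \<times> 'f)"
    by (subst card_Un_disjoint[symmetric]) auto
  then have nonzeros_g: "n ^ 2 - real d * n \<le> real (card {p. g p \<noteq> 0})"
    using zeros_g unfolding n_def by (simp add: power2_eq_square flip: of_nat_add of_nat_mult)
  have "real (card {i. u i \<noteq> g i}) \<le> 2 * n ^ 2 * distA {(0, 0)} u g"
    using \<open>n > 0\<close> by (simp add: distA_def n_def power2_eq_square field_simps)
  also have "\<dots> < 2 * \<rho> * n ^ 2"
    using dist_g \<open>n > 0\<close> by simp
  finally have disagree: "real (card {i. u i \<noteq> g i}) < 2 * \<rho> * n ^ 2" .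
  have "card {p. g p \<noteq> 0} \<le> card ({p. u p \<noteq> 0} \<union> {i. u i \<noteq> g i})"
    by (intro card_mono) auto
  also have "\<dots> \<le> card {p. u p \<noteq> 0} + card {i. u i \<noteq> g i}"
    by (rule card_Un_le)
  finally have "real (card {p. g p \<noteq> 0}) \<le> real (card {p. u p \<noteq> 0}) + real (card {i. u i \<noteq> g i})"
    by linarith
  moreover have "(1 - real d / n - 2 * \<rho>) * n ^ 2 = n ^ 2 - real d * n - 2 * \<rho> * n ^ 2"
    using \<open>n > 0\<close> by (simp add: field_simps power2_eq_square)
  ultimately show ?thesis
    using nonzeros_g disagree by (simp add: Nplane_def u_def)
qed

section \<open>Sparse lines in a dense plane of the walk\<close>

lemma card_power_ext_degree_eq:
  fixes H :: "'f::{finite,field} set"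
  assumes "ext_degree H m"
  shows "card H ^ m = CARD('f)"
proof -
  obtain b :: "nat \<Rightarrow> 'f" where "bij_betw (\<lambda>c. \<Sum>i<m. c i * b i) ({..<m} \<rightarrow>\<^sub>E H) UNIV"
    using assms unfolding ext_degree_def by blast
  then have "card ({..<m} \<rightarrow>\<^sub>E H) = CARD('f)" by (rule bij_betw_same_card)
  then show ?thesis by (simp add: card_funcsetE)
qed

lemma ext_degree_eq_1_if_card_2:
  fixes H :: "'f::{finite,field} set"
  assumes "is_subfield H" and "ext_degree H m" and "CARD('f) = 2"
  shows "m = 1"
proof -
  have "{0, 1} \<subseteq> H" using assms(1) unfolding is_subfield_def by auto
  then have "2 \<le> card H" using card_mono[of H "{0, 1}"] by simp
  moreover have "card H \<le> 2" using card_mono[of UNIV H] assms(3) by simp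
  ultimately have "(2::nat) ^ m = 2 ^ 1"
    using card_power_ext_degree_eq[OF assms(2)] assms(3) by simp
  then show ?thesis by (simp only: power_inject_exp)
qed

text \<open>For \<open>m = 1\<close> the map \<open>(t, s) \<mapsto> a + t h + s h'\<close> from \<open>F\<^sup>2\<close> to \<open>F\<^sup>1\<close> is never injective,
  so a zero of the restriction occurs at two points.\<close>
lemma restr_plane_nonzero_if_card_2:
  fixes f :: "('m::finite \<Rightarrow> 'f::{finite,field}) \<Rightarrow> 'f"
  assumes "CARD('m) = 1" and "CARD('f) = 2" and "3 \<le> Nplane f a h h'"
  shows "restr_plane f a h h' p \<noteq> 0"
proof
  assume zero: "restr_plane f a h h' p = 0"
  obtain j0 :: 'm where j0: "\<And>j. j = j0"
    using assms(1) by (metis card_1_singletonE UNIV_I singletonD)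
  obtain t s where p: "p = (t, s)" by fastforce
  define p' where "p' = (if h j0 = 0 \<and> h' j0 = 0 then (t + 1, s) else (t + h' j0, s - h j0))"
  have "p' \<noteq> p" by (auto simp: p'_def p)
  have "a j + fst p' * h j + snd p' * h' j = a j + t * h j + s * h' j" for j
    using j0[of j] by (auto simp: p'_def algebra_simps)
  then have "(\<lambda>j. a j + fst p' * h j + snd p' * h' j) = (\<lambda>j. a j + t * h j + s * h' j)"
    by (rule ext)
  then have "restr_plane f a h h' p' = 0"
    using zero by (simp add: restr_plane_def p case_prod_beta)
  with zero have "{q. restr_plane f a h h' q \<noteq> 0} \<subseteq> UNIV - {p, p'}" by auto
  then have "Nplane f a h h' \<le> card (UNIV - {p, p'})"
    unfolding Nplane_def by (intro card_mono) auto
  also have "\<dots> = 2"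
    using \<open>p' \<noteq> p\<close> assms(2) by (simp add: card_Diff_subset)
  finally show False using assms(3) by simp
qed

definition sparse_lines :: "(('m \<Rightarrow> 'f::{finite,field}) \<Rightarrow> 'f) \<Rightarrow> real \<Rightarrow> ('m \<Rightarrow> 'f) \<Rightarrow> ('m \<Rightarrow> 'f)
      \<Rightarrow> ('m \<Rightarrow> 'f) \<Rightarrow> (('f \<times> 'f) \<times> ('f \<times> 'f)) set" where
  "sparse_lines f \<theta> a h h' = {((s, s'), (t, t')).
     real (Nline f (\<lambda>j. a j + s * h j + s' * h' j) (\<lambda>j. t * h j + t' * h' j)) < \<theta>}"

lemma sparse_lines_eq_line_hits:
  "sparse_lines f \<theta> a h h' = {(p, u). real (line_hits {q. restr_plane f a h h' q \<noteq> 0} p u) < \<theta>}"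
proof -
  have "(\<lambda>j. a j + s * h j + s' * h' j + \<tau> * (t * h j + t' * h' j))
      = (\<lambda>j. a j + (s + \<tau> * t) * h j + (s' + \<tau> * t') * h' j)" for s s' t t' \<tau>
    by (simp add: algebra_simps)
  then show ?thesis
    by (auto simp: sparse_lines_def Nline_def line_hits_def line_point_def restr_plane_def)
qed

definition sparse_line_fraction :: "nat \<Rightarrow> real" where
  "sparse_line_fraction n = (if n = 2 then 0 else 16 / (9 * real n))"

lemma card_sparse_lines_le_fraction:
  fixes f :: "('m::finite \<Rightarrow> 'f::{finite,field}) \<Rightarrow> 'f"
  defines "n \<equiv> real CARD('f)"
  assumes "CARD('f) = 2 \<Longrightarrow> CARD('m) = 1"
    and dense: "(\<delta> - 2 * \<rho>) * n ^ 2 \<le> real (Nplane f a h h')"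
    and "3 / 4 \<le> \<delta>" and "\<delta> \<le> 1" and "0 < \<rho>" and "\<rho> \<le> \<delta> / 8"
  shows "real (card (sparse_lines f (2 * \<rho> * n) a h h')) \<le> sparse_line_fraction CARD('f) * n ^ 4"
proof (cases "CARD('f) = 2")
  case False
  then show ?thesis
    using card_sparse_line_hits_le[of \<delta> \<rho> "{q. restr_plane f a h h' q \<noteq> 0}"] assms(3-)
    by (simp add: sparse_lines_eq_line_hits sparse_line_fraction_def Nplane_def n_def)
next
  case True
  \<comment> \<open>Then the plane has at least \<open>3\<delta> \<ge> 9/4\<close>, hence 3, nonzero points, so all four are nonzero.\<close>
  have "9 / 4 \<le> real (Nplane f a h h')"
    using dense assms(4-) True by (simp add: n_def)
  then have "restr_plane f a h h' q \<noteq> 0" for q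
    using restr_plane_nonzero_if_card_2[OF assms(2)[OF True] True] by simp
  then have "line_hits {q. restr_plane f a h h' q \<noteq> 0} p u = CARD('f)" for p u
    by (simp add: line_hits_def)
  then have "sparse_lines f (2 * \<rho> * n) a h h' = {}"
    using True assms(5-) by (auto simp: sparse_lines_eq_line_hits n_def)
  then show ?thesis by (simp add: sparse_line_fraction_def n_def)
qed

lemma sparse_line_fraction_nonneg: "0 \<le> sparse_line_fraction n"
  by (simp add: sparse_line_fraction_def)

lemma abs_one_minus_four_div_le:
  assumes "2 \<le> n"
  shows "\<bar>1 - 4 / real n\<bar> \<le> 1 - sparse_line_fraction n"
proof -
  consider "n = 2" | "n = 3" | "4 \<le> n" using assms by linarith
  then show ?thesis
  proof cases
    case 3
    then have "\<bar>1 - 4 / real n\<bar> = 1 - 4 / real n" by (simp add: field_simps)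
    also have "\<dots> \<le> 1 - 16 / (9 * real n)" using 3 by (simp add: field_simps)
    finally show ?thesis using 3 by (simp add: sparse_line_fraction_def)
  qed (simp_all add: sparse_line_fraction_def)
qed

lemma sparse_line_fraction_le_1: "2 \<le> n \<Longrightarrow> sparse_line_fraction n \<le> 1"
  using abs_one_minus_four_div_le[of n] abs_ge_zero[of "1 - 4 / real n"] by linarith

lemma power_one_minus_four_div_le:
  assumes "2 \<le> n"
  shows "(1 - 4 / real n) ^ R \<le> (1 - sparse_line_fraction n) ^ R"
proof -
  have "(1 - 4 / real n) ^ R \<le> \<bar>1 - 4 / real n\<bar> ^ R"
    by (metis abs_ge_self power_abs)
  also have "\<dots> \<le> (1 - sparse_line_fraction n) ^ R"
    using abs_one_minus_four_div_le[OF assms] by (intro power_mono) simp_all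
  finally show ?thesis .
qed

section \<open>The walk\<close>

lemma card_PiE_filter_eq_sum:
  assumes "finite I" and "x \<in> I" and "finite S"
  shows "card {w \<in> I \<rightarrow>\<^sub>E S. P w} = (\<Sum>g\<in>(I - {x}) \<rightarrow>\<^sub>E S. card {y \<in> S. P (g(x := y))})"
proof -
  define \<Omega>' where "\<Omega>' = (I - {x}) \<rightarrow>\<^sub>E S"
  define upd where "upd = (\<lambda>(g :: 'a \<Rightarrow> 'b, y). g(x := y))"
  have "I \<rightarrow>\<^sub>E S = (\<lambda>(y, g). g(x := y)) ` (S \<times> \<Omega>')"
    using PiE_insert_eq[of x "I - {x}" "\<lambda>_. S"] assms(2) by (simp add: \<Omega>'_def insert_absorb)
  then have "{w \<in> I \<rightarrow>\<^sub>E S. P w} = upd ` (SIGMA g:\<Omega>'. {y \<in> S. P (g(x := y))})"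
    by (auto simp: upd_def)
  moreover have "inj_on upd (SIGMA g:\<Omega>'. {y \<in> S. P (g(x := y))})"
    using inj_combinator[of x "I - {x}" "\<lambda>_. S"]
    by (auto simp: inj_on_def upd_def \<Omega>'_def)
  ultimately show ?thesis
    using assms(1,3) by (simp add: card_image \<Omega>'_def finite_PiE)
qed

lemma card_PiE_conj_le:
  fixes c :: real
  assumes "finite I" and "x \<in> I" and "finite S"
    and indep: "\<And>w y. w \<in> I \<rightarrow>\<^sub>E S \<Longrightarrow> y \<in> S \<Longrightarrow> A (w(x := y)) = A w"
    and bound: "\<And>w. w \<in> I \<rightarrow>\<^sub>E S \<Longrightarrow> A w \<Longrightarrow> real (card {y \<in> S. B (w(x := y))}) \<le> c * real (card S)"
  shows "real (card {w \<in> I \<rightarrow>\<^sub>E S. A w \<and> B w}) \<le> c * real (card {w \<in> I \<rightarrow>\<^sub>E S. A w})"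
proof -
  have fiber: "real (card {y \<in> S. A (g(x := y)) \<and> B (g(x := y))}) \<le> c * real (card {y \<in> S. A (g(x := y))})"
    if g: "g \<in> (I - {x}) \<rightarrow>\<^sub>E S" and "y0 \<in> S" for g y0
  proof -
    have w: "g(x := y0) \<in> I \<rightarrow>\<^sub>E S"
      using PiE_fun_upd[OF \<open>y0 \<in> S\<close> g, of x] assms(2) by (simp add: insert_absorb)
    have "A (g(x := y)) = A (g(x := y0))" if "y \<in> S" for y
      using indep[OF w that] by simp
    then have "{y \<in> S. A (g(x := y)) \<and> B (g(x := y))} = (if A (g(x := y0)) then {y \<in> S. B (g(x := y))} else {})"
      and "{y \<in> S. A (g(x := y))} = (if A (g(x := y0)) then S else {})"
      by auto
    then show ?thesis
      using bound[OF w] by simp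
  qed
  show ?thesis
  proof (cases "S = {}")
    case True
    with assms(2) show ?thesis by simp
  next
    case False
    then obtain y0 where "y0 \<in> S" by blast
    then show ?thesis
      unfolding card_PiE_filter_eq_sum[OF assms(1-3)] of_nat_sum sum_distrib_left
      by (intro sum_mono fiber)
  qed
qed

type_synonym ('f, 'm) walk_step = "'f \<times> 'f \<times> 'f \<times> 'f \<times> ('m \<Rightarrow> 'f)"

definition step_space :: "'f::{finite,field} set \<Rightarrow> ('f, 'm::finite) walk_step set" where
  "step_space H = UNIV \<times> UNIV \<times> UNIV \<times> UNIV \<times> Hvecs H"

lemma walk_space_eq_PiE: "walk_space H R = {..<R} \<rightarrow>\<^sub>E step_space H"
  by (simp add: walk_space_def step_space_def)

lemma walk_prob_eq_card:
  fixes P :: "(nat \<Rightarrow> ('f::{finite,field}, 'm::finite) walk_step) \<Rightarrow> bool"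
  assumes "H \<noteq> {}"
  shows "walk_prob H R P = real (card {w \<in> walk_space H R. P w})
                             / real (card (walk_space H R :: (nat \<Rightarrow> ('f, 'm) walk_step) set))"
proof -
  obtain c where "c \<in> H" using assms by blast
  then have "(\<lambda>_. c) \<in> Hvecs H" by (simp add: Hvecs_def)
  then have "walk_space H R \<noteq> ({} :: (nat \<Rightarrow> ('f, 'm) walk_step) set)"
    and "finite (walk_space H R :: (nat \<Rightarrow> ('f, 'm) walk_step) set)"
    by (auto simp: walk_space_eq_PiE step_space_def PiE_eq_empty_iff finite_PiE)
  then show ?thesis
    unfolding walk_prob_def by (simp add: measure_pmf_of_set Int_def)
qed

lemma walk_prob_split:
  "walk_prob H R P = walk_prob H R (\<lambda>w. P w \<and> Q w) + walk_prob H R (\<lambda>w. P w \<and> \<not> Q w)"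
proof -
  have "{w. P w} = {w. P w \<and> Q w} \<union> {w. P w \<and> \<not> Q w}" by auto
  then show ?thesis
    unfolding walk_prob_def by (simp add: measure_pmf.finite_measure_Union[symmetric] disjoint_iff)
qed

lemma walk_prob_conj_le:
  fixes A B :: "(nat \<Rightarrow> ('f::{finite,field}, 'm::finite) walk_step) \<Rightarrow> bool" and c :: real
  assumes "H \<noteq> {}" and "j < R"
    and "\<And>w v. w \<in> walk_space H R \<Longrightarrow> v \<in> step_space H \<Longrightarrow> A (w(j := v)) = A w"
    and "\<And>w. w \<in> walk_space H R \<Longrightarrow> A w \<Longrightarrow>
           real (card {v \<in> step_space H. B (w(j := v))}) \<le> c * real (card (step_space H :: ('f, 'm) walk_step set))"
  shows "walk_prob H R (\<lambda>w. A w \<and> B w) \<le> c * walk_prob H R A"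
proof -
  have "real (card {w \<in> walk_space H R. A w \<and> B w}) \<le> c * real (card {w \<in> walk_space H R. A w})"
    unfolding walk_space_eq_PiE
  proof (rule card_PiE_conj_le)
    show "finite (step_space H :: ('f, 'm) walk_step set)" by (simp add: step_space_def)
  next
    fix w assume "w \<in> {..<R} \<rightarrow>\<^sub>E step_space H" and "A w"
    then show "real (card {v \<in> step_space H. B (w(j := v))}) \<le> c * real (card (step_space H :: ('f, 'm) walk_step set))"
      using assms(4) by (simp add: walk_space_eq_PiE)
  qed (use assms(2,3) in \<open>auto simp: walk_space_eq_PiE\<close>)
  then show ?thesis
    unfolding walk_prob_eq_card[OF assms(1)] by (simp add: divide_right_mono)
qed

lemma walk_cong: "(\<And>l. l < k \<Longrightarrow> w l = w' l) \<Longrightarrow> walk x h0 h0' w k = walk x h0 h0' w' k"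
  by (induction k) (auto split: prod.splits)

lemma walk_fun_upd_le: "k \<le> j \<Longrightarrow> walk x h0 h0' (w(j := v)) k = walk x h0 h0' w k"
  by (rule walk_cong) auto

lemma card_steps_to_sparse_line:
  fixes f :: "('m::finite \<Rightarrow> 'f::{finite,field}) \<Rightarrow> 'f" and H :: "'f set"
  assumes "walk x h0 h0' w j = (a, h, h')"
  shows "card {v \<in> step_space H. real (Nline f (fst (walk x h0 h0' (w(j := v)) (Suc j)))
                                             (fst (snd (walk x h0 h0' (w(j := v)) (Suc j))))) < \<theta>}
       = card (sparse_lines f \<theta> a h h') * card (Hvecs H :: ('m \<Rightarrow> 'f) set)"
proof -
  define \<psi> :: "(('f \<times> 'f) \<times> ('f \<times> 'f)) \<times> ('m \<Rightarrow> 'f) \<Rightarrow> 'f \<times> 'f \<times> 'f \<times> 'f \<times> ('m \<Rightarrow> 'f)"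
    where "\<psi> = (\<lambda>(((s, s'), (t, t')), g). (s, s', t, t', g))"
  have "{v \<in> step_space H. real (Nline f (fst (walk x h0 h0' (w(j := v)) (Suc j)))
                                      (fst (snd (walk x h0 h0' (w(j := v)) (Suc j))))) < \<theta>}
      = \<psi> ` (sparse_lines f \<theta> a h h' \<times> Hvecs H)"
  proof (intro equalityI subsetI)
    fix v assume "v \<in> {v \<in> step_space H. real (Nline f (fst (walk x h0 h0' (w(j := v)) (Suc j)))
                                      (fst (snd (walk x h0 h0' (w(j := v)) (Suc j))))) < \<theta>}"
    moreover obtain s s' t t' g where "v = (s, s', t, t', g)" by (cases v)
    ultimately show "v \<in> \<psi> ` (sparse_lines f \<theta> a h h' \<times> Hvecs H)"
      by (auto simp: walk_fun_upd_le assms step_space_def sparse_lines_def \<psi>_def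
          intro!: image_eqI[of _ _ "(((s, s'), (t, t')), g)"])
  qed (auto simp: walk_fun_upd_le assms step_space_def sparse_lines_def \<psi>_def)
  moreover have "inj_on \<psi> (sparse_lines f \<theta> a h h' \<times> Hvecs H)"
    by (auto simp: inj_on_def \<psi>_def)
  ultimately show ?thesis by (simp only: card_image card_cartesian_product)
qed

lemma walk_prob_sparse_line_le:
  fixes f :: "('m::finite \<Rightarrow> 'f::{finite,field}) \<Rightarrow> 'f" and H :: "'f set"
  defines "n \<equiv> real CARD('f)"
  assumes "H \<noteq> {}" and "j < R"
    and dense_start: "(\<delta> - 2 * \<rho>) * n ^ 2 \<le> real (Nplane f x h0 h0')"
    and sparse: "\<And>a h h'. (\<delta> - 2 * \<rho>) * n ^ 2 \<le> real (Nplane f a h h') \<Longrightarrow>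
                   real (card (sparse_lines f (2 * \<rho> * n) a h h')) \<le> q * n ^ 4"
  shows "walk_prob H R (\<lambda>w. (\<forall>k\<in>{1..j}. eventF f \<delta> \<rho> x h0 h0' w k)
           \<and> real (Nline f (fst (walk x h0 h0' w (Suc j))) (fst (snd (walk x h0 h0' w (Suc j))))) < 2 * \<rho> * n)
         \<le> q * walk_prob H R (\<lambda>w. \<forall>k\<in>{1..j}. eventF f \<delta> \<rho> x h0 h0' w k)"
proof (rule walk_prob_conj_le[OF \<open>H \<noteq> {}\<close> \<open>j < R\<close>])
  show "(\<forall>k\<in>{1..j}. eventF f \<delta> \<rho> x h0 h0' (w(j := v)) k) = (\<forall>k\<in>{1..j}. eventF f \<delta> \<rho> x h0 h0' w k)"
    for w v by (simp add: eventF_def walk_fun_upd_le)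
  fix w assume survived: "\<forall>k\<in>{1..j}. eventF f \<delta> \<rho> x h0 h0' w k"
  obtain a h h' where walk_j: "walk x h0 h0' w j = (a, h, h')" by (metis prod.exhaust)
  have "(\<delta> - 2 * \<rho>) * n ^ 2 \<le> real (Nplane f a h h')"
  proof (cases "j = 0")
    case True
    with walk_j dense_start show ?thesis by simp
  next
    case False
    with survived have "eventF f \<delta> \<rho> x h0 h0' w j" by simp
    with walk_j show ?thesis by (simp add: eventF_def n_def)
  qed
  then have "real (card {v \<in> step_space H. real (Nline f (fst (walk x h0 h0' (w(j := v)) (Suc j)))
                 (fst (snd (walk x h0 h0' (w(j := v)) (Suc j))))) < 2 * \<rho> * n})
        \<le> q * n ^ 4 * real (card (Hvecs H :: ('m \<Rightarrow> 'f) set))"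
    using card_steps_to_sparse_line[OF walk_j, of H f "2 * \<rho> * n"] sparse
    by (simp add: mult_right_mono)
  also have "\<dots> = q * real (card (step_space H :: ('f, 'm) walk_step set))"
    by (simp add: step_space_def card_cartesian_product n_def power4_eq_xxxx)
  finally show "real (card {v \<in> step_space H. real (Nline f (fst (walk x h0 h0' (w(j := v)) (Suc j)))
                 (fst (snd (walk x h0 h0' (w(j := v)) (Suc j))))) < 2 * \<rho> * n})
        \<le> q * real (card (step_space H :: ('f, 'm) walk_step set))" .
qed

lemma walk_prob_all_eventF_Suc_ge:
  fixes f :: "('m::finite \<Rightarrow> 'f::{finite,field}) \<Rightarrow> 'f" and H :: "'f set"
  defines "n \<equiv> real CARD('f)"
  assumes "H \<noteq> {}" and "j < R"
    and dense_start: "(\<delta> - 2 * \<rho>) * n ^ 2 \<le> real (Nplane f x h0 h0')"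
    and sparse: "\<And>a h h'. (\<delta> - 2 * \<rho>) * n ^ 2 \<le> real (Nplane f a h h') \<Longrightarrow>
                   real (card (sparse_lines f (2 * \<rho> * n) a h h')) \<le> q * n ^ 4"
  shows "(1 - q) * walk_prob H R (\<lambda>w. \<forall>k\<in>{1..j}. eventF f \<delta> \<rho> x h0 h0' w k)
           - walk_prob H R (\<lambda>w. (\<forall>k\<in>{1..j}. eventF f \<delta> \<rho> x h0 h0' w k) \<and> eventE f \<delta> \<rho> x h0 h0' w (Suc j))
         \<le> walk_prob H R (\<lambda>w. \<forall>k\<in>{1..Suc j}. eventF f \<delta> \<rho> x h0 h0' w k)"
proof -
  define G where "G = (\<lambda>w. \<forall>k\<in>{1..j}. eventF f \<delta> \<rho> x h0 h0' w k)"
  define line_dense where "line_dense w = (2 * \<rho> * n \<le>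
      real (Nline f (fst (walk x h0 h0' w (Suc j))) (fst (snd (walk x h0 h0' w (Suc j))))))" for w
  define plane_dense where "plane_dense w = ((\<delta> - 2 * \<rho>) * n ^ 2 \<le> real (Nplane f
      (fst (walk x h0 h0' w (Suc j))) (fst (snd (walk x h0 h0' w (Suc j)))) (snd (snd (walk x h0 h0' w (Suc j))))))"
    for w
  have survive_Suc: "(\<forall>k\<in>{1..Suc j}. eventF f \<delta> \<rho> x h0 h0' w k) \<longleftrightarrow> G w \<and> line_dense w \<and> plane_dense w" for w
    by (auto simp: G_def atLeastAtMostSuc_conv eventF_def line_dense_def plane_dense_def n_def
        split: prod.splits)
  have E: "eventE f \<delta> \<rho> x h0 h0' w (Suc j) \<longleftrightarrow> line_dense w \<and> \<not> plane_dense w" for w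
    by (auto simp: eventE_def line_dense_def plane_dense_def n_def split: prod.splits)
  have "walk_prob H R G = walk_prob H R (\<lambda>w. G w \<and> line_dense w) + walk_prob H R (\<lambda>w. G w \<and> \<not> line_dense w)"
    by (rule walk_prob_split)
  moreover have "walk_prob H R (\<lambda>w. G w \<and> line_dense w)
      = walk_prob H R (\<lambda>w. \<forall>k\<in>{1..Suc j}. eventF f \<delta> \<rho> x h0 h0' w k)
      + walk_prob H R (\<lambda>w. G w \<and> eventE f \<delta> \<rho> x h0 h0' w (Suc j))"
    unfolding survive_Suc E by (subst walk_prob_split[where Q=plane_dense]) (simp add: conj_assoc)
  moreover have "walk_prob H R (\<lambda>w. G w \<and> \<not> line_dense w) \<le> q * walk_prob H R G"
    using walk_prob_sparse_line_le[OF assms(2-5)[unfolded n_def]]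
    by (simp add: G_def line_dense_def n_def not_le)
  ultimately show ?thesis
    unfolding G_def by (simp add: algebra_simps)
qed

lemma recurrence_lower_bound:
  fixes a e :: "nat \<Rightarrow> real"
  assumes "a 0 = 1" and "0 \<le> c" and "c \<le> 1" and "\<And>k. 0 \<le> e k"
    and "\<And>j. j < R \<Longrightarrow> c * a j - e (Suc j) \<le> a (Suc j)"
  shows "c ^ R - (\<Sum>k = 1..R. e k) \<le> a R"
  using assms(5)
proof (induction R)
  case 0
  then show ?case using assms(1) by simp
next
  case (Suc R)
  have "c * (\<Sum>k = 1..R. e k) \<le> (\<Sum>k = 1..R. e k)"
    using assms(2-4) by (simp add: mult_left_le_one_le sum_nonneg)
  then have "c ^ Suc R - (\<Sum>k = 1..Suc R. e k) \<le> c * (c ^ R - (\<Sum>k = 1..R. e k)) - e (Suc R)"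
    by (simp add: algebra_simps)
  also have "\<dots> \<le> c * a R - e (Suc R)"
    using Suc assms(2) by (simp add: mult_left_mono)
  also have "\<dots> \<le> a (Suc R)"
    using Suc.prems by simp
  finally show ?case .
qed

lemma walk_prob_all_eventF_ge:
  fixes f :: "('m::finite \<Rightarrow> 'f::{finite,field}) \<Rightarrow> 'f" and H :: "'f set"
  defines "n \<equiv> real CARD('f)"
  assumes "H \<noteq> {}" and "0 \<le> q" and "q \<le> 1"
    and dense_start: "(\<delta> - 2 * \<rho>) * n ^ 2 \<le> real (Nplane f x h0 h0')"
    and sparse: "\<And>a h h'. (\<delta> - 2 * \<rho>) * n ^ 2 \<le> real (Nplane f a h h') \<Longrightarrow>
                   real (card (sparse_lines f (2 * \<rho> * n) a h h')) \<le> q * n ^ 4"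
  shows "(1 - q) ^ R - (\<Sum>i = 1..R. walk_prob H R (\<lambda>w. (\<forall>k\<in>{1..<i}. eventF f \<delta> \<rho> x h0 h0' w k)
                                                   \<and> eventE f \<delta> \<rho> x h0 h0' w i))
         \<le> walk_prob H R (\<lambda>w. \<forall>i\<in>{1..R}. eventF f \<delta> \<rho> x h0 h0' w i)"
proof (rule recurrence_lower_bound[where a="\<lambda>i. walk_prob H R (\<lambda>w. \<forall>k\<in>{1..i}. eventF f \<delta> \<rho> x h0 h0' w k)"])
  show "(1 - q) * walk_prob H R (\<lambda>w. \<forall>k\<in>{1..j}. eventF f \<delta> \<rho> x h0 h0' w k)
        - walk_prob H R (\<lambda>w. (\<forall>k\<in>{1..<Suc j}. eventF f \<delta> \<rho> x h0 h0' w k) \<and> eventE f \<delta> \<rho> x h0 h0' w (Suc j))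
      \<le> walk_prob H R (\<lambda>w. \<forall>k\<in>{1..Suc j}. eventF f \<delta> \<rho> x h0 h0' w k)" if "j < R" for j
    using walk_prob_all_eventF_Suc_ge[OF \<open>H \<noteq> {}\<close> that dense_start[unfolded n_def] sparse[unfolded n_def]]
    by (simp add: atLeastLessThanSuc_atLeastAtMost)
qed (use assms(3,4) in \<open>simp_all add: walk_prob_def\<close>)

theorem mainTheorem6:
  fixes H :: "'f::{finite,field} set"
    and f :: "('m::finite \<Rightarrow> 'f) \<Rightarrow> 'f"
    and x h0 h0' :: "'m \<Rightarrow> 'f"
    and d R :: nat and \<delta> \<rho> :: real
  assumes "is_subfield H"
    and "ext_degree H CARD('m)"
    and "d < CARD('f)"
    and "\<delta> = 1 - real d / real CARD('f)"
    and "\<delta> \<ge> 3 / 4"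
    and "0 < \<rho>" and "\<rho> \<le> \<delta> / 8"
    and "f x \<noteq> 0"
    and "R \<ge> 1"
    and "h0 \<in> Hvecs H" and "h0' \<in> Hvecs H"
    and "distA_set {(0, 0)} (restr_plane f x h0 h0') (RM2 d) < \<rho>"
  shows "walk_prob H R (\<lambda>\<omega>. \<forall>i\<in>{1..R}. eventF f \<delta> \<rho> x h0 h0' \<omega> i)
     \<ge> (1 - 4 / real CARD('f)) ^ R
        - (\<Sum>i = 1..R. walk_prob H R (\<lambda>\<omega>. (\<forall>k\<in>{1..<i}. eventF f \<delta> \<rho> x h0 h0' \<omega> k)
                                           \<and> eventE f \<delta> \<rho> x h0 h0' \<omega> i))"
proof -
  define q where "q = sparse_line_fraction CARD('f)"
  have "H \<noteq> {}" and "2 \<le> CARD('f)"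
    using assms(1) card_mono[of UNIV "{0, 1 :: 'f}"] by (auto simp: is_subfield_def)
  have "\<delta> \<le> 1" using assms(4) by simp
  have dense_start: "(\<delta> - 2 * \<rho>) * real CARD('f) ^ 2 \<le> real (Nplane f x h0 h0')"
    using Nplane_ge_of_distA_set_RM2[OF assms(12) _ assms(8)] assms(4,7) \<open>\<delta> \<le> 1\<close> by simp
  have sparse: "real (card (sparse_lines f (2 * \<rho> * real CARD('f)) a h h')) \<le> q * real CARD('f) ^ 4"
    if "(\<delta> - 2 * \<rho>) * real CARD('f) ^ 2 \<le> real (Nplane f a h h')" for a h h'
    using card_sparse_lines_le_fraction[OF _ that] ext_degree_eq_1_if_card_2[OF assms(1,2)]
      assms(5-7) \<open>\<delta> \<le> 1\<close> by (simp add: q_def)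
  have "0 \<le> q" and "q \<le> 1"
    using sparse_line_fraction_nonneg sparse_line_fraction_le_1[OF \<open>2 \<le> CARD('f)\<close>] by (simp_all add: q_def)
  then show ?thesis
    using walk_prob_all_eventF_ge[OF \<open>H \<noteq> {}\<close> _ _ dense_start sparse, of R]
      power_one_minus_four_div_le[OF \<open>2 \<le> CARD('f)\<close>, of R] unfolding q_def by linarith
qed

end
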